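(* Let $\mathcal{C}$ be a hypergraph and $F$ an edge of $\mathcal{C}$. Then there is a long exact sequence of reduced homology groups (integer coefficients) $$\cdots\to \tilde H_{i-|F|+1}(\operatorname{Ind}(\mathcal{C}:F))\to \tilde H_i(\operatorname{Ind}(\mathcal{C}))\to \tilde H_i(\operatorname{Ind}(\mathcal{C}-F))\to \tilde H_{i-|F|}(\operatorname{Ind}(\mathcal{C}:F))\to\cdots$$
   Context: A hypergraph $\mathcal{C}$ on a finite vertex set $V$ is a family of pairwise incomparable subsets of $V$ (its edges), each of cardinality at least $2$. The independence complex $\operatorname{Ind}(\mathcal{C})$ is the simplicial complex on $V$ whose faces are the subsets of $V$ containing no edge of $\mathcal{C}$. For an edge $F$: $\mathcal{C}-F$ is the hypergraph on $V$ with edge set $\mathcal{C}\setminus\{F\}$; $N_{\mathcal{C}}(F)=\bigcup\{E\setminus F : E\in\mathcal{C},\ |E\setminus F|=1\}$; and $\mathcal{C}:F$ is the hypergraph on $V\setminus(F\cup N_{\mathcal{C}}(F))$ whose edges are the members of cardinality at least $2$ among the inclusion-minimal members of the family $\{E\setminus F : E\in \mathcal{C}-F\}$ (equivalently, $\operatorname{Ind}(\mathcal{C}:F)$ is the link of $F$ in $\operatorname{Ind}(\mathcal{C}-F)$). *)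

theory Defs
  imports "HOL-Algebra.Free_Abelian_Groups" "HOL-Algebra.Exact_Sequence" "HOL-Algebra.Coset"
begin

definition hypergraph :: "'a set \<Rightarrow> 'a set set \<Rightarrow> bool" where
  "hypergraph V C \<longleftrightarrow> finite V \<and> (\<forall>E\<in>C. E \<subseteq> V \<and> card E \<ge> 2)
      \<and> (\<forall>E\<in>C. \<forall>E'\<in>C. E \<subseteq> E' \<longrightarrow> E = E')"

definition Ind :: "'a set \<Rightarrow> 'a set set \<Rightarrow> 'a set set" where
  "Ind V C = {\<sigma>. \<sigma> \<subseteq> V \<and> (\<forall>E\<in>C. \<not> E \<subseteq> \<sigma>)}"

text \<open>C - F (same vertex set V, edge F deleted).\<close>
definition hdel :: "'a set set \<Rightarrow> 'a set \<Rightarrow> 'a set set" where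
  "hdel C F = C - {F}"

definition hnbhd :: "'a set set \<Rightarrow> 'a set \<Rightarrow> 'a set" where
  "hnbhd C F = \<Union>{E - F | E. E \<in> C \<and> card (E - F) = 1}"

text \<open>C : F lives on the vertex set V - (F \<union> N_C(F)).\<close>
definition hcolon_vertices :: "'a set \<Rightarrow> 'a set set \<Rightarrow> 'a set \<Rightarrow> 'a set" where
  "hcolon_vertices V C F = V - (F \<union> hnbhd C F)"

definition hcolon_edges :: "'a set set \<Rightarrow> 'a set \<Rightarrow> 'a set set" where
  "hcolon_edges C F =
     (let M = {E - F | E. E \<in> hdel C F}
      in {A \<in> M. (\<forall>B\<in>M. B \<subseteq> A \<longrightarrow> B = A) \<and> card A \<ge> 2})"

text \<open>The faces of
  dimension n are those of cardinality n+1; the empty face has dimension -1 (augmentation),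
  giving reduced homology. Orientation via the linear order of the vertex type.\<close>

definition simp_faces :: "'a set set \<Rightarrow> int \<Rightarrow> 'a set set" where
  "simp_faces K n = {\<sigma> \<in> K. int (card \<sigma>) = n + 1}"

definition simp_chain_group :: "'a set set \<Rightarrow> int \<Rightarrow> ('a set \<Rightarrow>\<^sub>0 int) monoid" where
  "simp_chain_group K n = free_Abelian_group (simp_faces K n)"

definition simp_bd_simplex :: "'a::linorder set \<Rightarrow> ('a set \<Rightarrow>\<^sub>0 int)" where
  "simp_bd_simplex \<sigma> =
     (\<Sum>v\<in>\<sigma>. frag_cmul ((-1) ^ card {u\<in>\<sigma>. u < v}) (frag_of (\<sigma> - {v})))"

definition simp_boundary :: "('a::linorder set \<Rightarrow>\<^sub>0 int) \<Rightarrow> ('a set \<Rightarrow>\<^sub>0 int)" where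
  "simp_boundary = frag_extend simp_bd_simplex"

definition simp_cycles :: "'a::linorder set set \<Rightarrow> int \<Rightarrow> ('a set \<Rightarrow>\<^sub>0 int) set" where
  "simp_cycles K n = {c \<in> carrier (simp_chain_group K n). simp_boundary c = 0}"

definition simp_boundaries :: "'a::linorder set set \<Rightarrow> int \<Rightarrow> ('a set \<Rightarrow>\<^sub>0 int) set" where
  "simp_boundaries K n = simp_boundary ` carrier (simp_chain_group K (n + 1))"

definition reduced_homology :: "'a::linorder set set \<Rightarrow> int \<Rightarrow> ('a set \<Rightarrow>\<^sub>0 int) set monoid" where
  "reduced_homology K n =
     subgroup_generated (simp_chain_group K n) (simp_cycles K n) Mod simp_boundaries K n"

end

theory Submission
  imports Defs
begin

text \<open>Write \<open>K = Ind(C)\<close>, \<open>K' = Ind(C - F)\<close> and \<open>L = Ind(C:F)\<close>. Then \<open>K \<subseteq> K'\<close>, the faces of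
  \<open>K'\<close> outside \<open>K\<close> are exactly those containing \<open>F\<close>, and \<open>\<sigma> \<mapsto> \<sigma> - F\<close> maps them bijectively onto
  the faces of \<open>L\<close>, lowering the dimension by \<open>|F|\<close>. Twisted by the sign of the shuffle of \<open>F\<close>
  past \<open>\<tau>\<close>, the maps \<open>\<tau> \<mapsto> F \<union> \<tau>\<close> and \<open>\<sigma> \<mapsto> \<sigma> - F\<close> commute with the boundary up to chains of \<open>K\<close>,
  so \<open>0 \<rightarrow> C(K) \<rightarrow> C(K') \<rightarrow> C(L)[|F|] \<rightarrow> 0\<close> is a short exact sequence of chain complexes. The
  long exact sequence is its homology sequence, with connecting map \<open>y \<mapsto> \<partial>(F \<union> y)\<close>; exactness
  is verified directly on cycles and boundaries, homology being the quotient of the cycles by the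
  boundaries inside the free Abelian group on the faces.\<close>

section \<open>The boundary operator\<close>

lemma boundary_frag_of: "simp_boundary (frag_of \<sigma>) = simp_bd_simplex \<sigma>"
  by (simp add: simp_boundary_def)

lemma boundary_add: "simp_boundary (a + b) = simp_boundary a + simp_boundary b"
  by (simp add: simp_boundary_def frag_extend_add)

lemma boundary_diff: "simp_boundary (a - b) = simp_boundary a - simp_boundary b"
  by (simp add: simp_boundary_def frag_extend_diff)

lemma boundary_0 [simp]: "simp_boundary 0 = 0"
  by (simp add: simp_boundary_def)

lemma boundary_cmul: "simp_boundary (frag_cmul c a) = frag_cmul c (simp_boundary a)"
  by (simp add: simp_boundary_def frag_extend_cmul)

lemma boundary_sum: "finite I \<Longrightarrow> simp_boundary (\<Sum>i\<in>I. g i) = (\<Sum>i\<in>I. simp_boundary (g i))"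
  by (simp add: simp_boundary_def frag_extend_sum o_def)

lemma frag_extend_extend:
  "frag_extend f (frag_extend g c) = frag_extend (\<lambda>x. frag_extend f (g x)) c"
  using subset_UNIV by (induction c rule: frag_induction) (auto simp: frag_extend_diff)

lemma sum_swap_antisym_eq_0:
  fixes T :: "'b \<times> 'b \<Rightarrow> ('c \<Rightarrow>\<^sub>0 int)"
  assumes "finite P" and swap: "\<And>v w. (v, w) \<in> P \<Longrightarrow> (w, v) \<in> P"
    and antisym: "\<And>v w. (v, w) \<in> P \<Longrightarrow> T (w, v) = - T (v, w)"
  shows "sum T P = 0"
proof (rule poly_mapping_eqI)
  fix k
  have "bij_betw prod.swap P P"
    by (rule bij_betwI[where g = prod.swap]) (auto intro: swap)
  then have "sum T P = sum (T \<circ> prod.swap) P"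
    by (simp add: sum.reindex_bij_betw)
  also have "\<dots> = sum (\<lambda>p. - T p) P"
    by (rule sum.cong) (auto simp: antisym)
  also have "\<dots> = - sum T P"
    by (simp add: sum_negf)
  finally have "sum T P = - sum T P" .
  from arg_cong[OF this, of "\<lambda>c. Poly_Mapping.lookup c k"]
  show "Poly_Mapping.lookup (sum T P) k = Poly_Mapping.lookup 0 k"
    by (simp add: lookup_uminus)
qed

definition face_sign :: "'a::linorder set \<Rightarrow> 'a \<Rightarrow> int" where
  "face_sign \<sigma> v = (-1) ^ card {u\<in>\<sigma>. u < v}"

lemma simp_bd_simplex_face_sign:
  "simp_bd_simplex \<sigma> = (\<Sum>v\<in>\<sigma>. frag_cmul (face_sign \<sigma> v) (frag_of (\<sigma> - {v})))"
  by (simp add: simp_bd_simplex_def face_sign_def)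

lemma face_sign_Diff_less:
  assumes "finite \<sigma>" "v \<in> \<sigma>" "w \<in> \<sigma>" "v < w"
  shows "face_sign (\<sigma> - {v}) w = - face_sign \<sigma> w" "face_sign (\<sigma> - {w}) v = face_sign \<sigma> v"
proof -
  have "{u\<in>\<sigma>. u < w} = insert v {u\<in>\<sigma> - {v}. u < w}"
    using assms by auto
  then have "card {u\<in>\<sigma>. u < w} = Suc (card {u\<in>\<sigma> - {v}. u < w})"
    using assms by (simp add: card_insert_if)
  then show "face_sign (\<sigma> - {v}) w = - face_sign \<sigma> w"
    by (simp add: face_sign_def)
  have "{u\<in>\<sigma>. u < v} = {u\<in>\<sigma> - {w}. u < v}"
    using assms(4) by auto
  then show "face_sign (\<sigma> - {w}) v = face_sign \<sigma> v"
    by (simp add: face_sign_def)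
qed

lemma boundary_bd_simplex: "simp_boundary (simp_bd_simplex \<sigma>) = 0"
proof (cases "finite \<sigma>")
  case False
  then show ?thesis by (simp add: simp_bd_simplex_def)
next
  case True
  let ?T = "\<lambda>(v, w). frag_cmul (face_sign \<sigma> v * face_sign (\<sigma> - {v}) w) (frag_of (\<sigma> - {v} - {w}))"
  have "simp_boundary (simp_bd_simplex \<sigma>) = (\<Sum>v\<in>\<sigma>. \<Sum>w\<in>\<sigma> - {v}. ?T (v, w))"
    using True by (simp add: simp_bd_simplex_face_sign boundary_sum boundary_cmul boundary_frag_of
        frag_cmul_sum)
  also have "\<dots> = sum ?T (SIGMA v:\<sigma>. \<sigma> - {v})"
    using True by (simp add: sum.Sigma)
  also have "\<dots> = 0"
  proof (rule sum_swap_antisym_eq_0)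
    fix v w assume "(v, w) \<in> (SIGMA v:\<sigma>. \<sigma> - {v})"
    then have v: "v \<in> \<sigma>" and w: "w \<in> \<sigma>" and "v \<noteq> w" by auto
    have swap: "\<sigma> - {w} - {v} = \<sigma> - {v} - {w}" by auto
    show "?T (w, v) = - ?T (v, w)"
    proof (cases "v < w")
      case True
      then show ?thesis using face_sign_Diff_less[OF \<open>finite \<sigma>\<close> v w] swap by (simp add: mult.commute)
    next
      case False
      then have "w < v" using \<open>v \<noteq> w\<close> by auto
      then show ?thesis using face_sign_Diff_less[OF \<open>finite \<sigma>\<close> w v] swap by (simp add: mult.commute)
    qed
  qed (use True in auto)
  finally show ?thesis .
qed

lemma boundary_boundary: "simp_boundary (simp_boundary c) = 0"
proof -
  have "simp_boundary (simp_boundary c) = frag_extend (\<lambda>x. simp_boundary (simp_bd_simplex x)) c"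
    by (simp add: simp_boundary_def frag_extend_extend)
  also have "\<dots> = 0"
    by (rule frag_extend_eq_0) (simp add: boundary_bd_simplex)
  finally show ?thesis .
qed

section \<open>Subquotients of free Abelian groups and induced maps\<close>

definition additive_subgroup :: "('b \<Rightarrow>\<^sub>0 int) set \<Rightarrow> bool" where
  "additive_subgroup B \<longleftrightarrow> 0 \<in> B \<and> (\<forall>x\<in>B. \<forall>y\<in>B. x - y \<in> B)"

definition additive :: "(('b \<Rightarrow>\<^sub>0 int) \<Rightarrow> ('c \<Rightarrow>\<^sub>0 int)) \<Rightarrow> bool" where
  "additive f \<longleftrightarrow> (\<forall>x y. f (x + y) = f x + f y)"

definition add_coset :: "('b \<Rightarrow>\<^sub>0 int) set \<Rightarrow> ('b \<Rightarrow>\<^sub>0 int) \<Rightarrow> ('b \<Rightarrow>\<^sub>0 int) set" where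
  "add_coset B z = (\<Union>h\<in>B. {h + z})"

definition induced_map ::
    "('c \<Rightarrow>\<^sub>0 int) set \<Rightarrow> (('b \<Rightarrow>\<^sub>0 int) \<Rightarrow> ('c \<Rightarrow>\<^sub>0 int)) \<Rightarrow> ('b \<Rightarrow>\<^sub>0 int) set \<Rightarrow> ('c \<Rightarrow>\<^sub>0 int) set"
  where "induced_map B' f X = (\<Union>x\<in>X. add_coset B' (f x))"

abbreviation subquotient ::
    "'b set \<Rightarrow> ('b \<Rightarrow>\<^sub>0 int) set \<Rightarrow> ('b \<Rightarrow>\<^sub>0 int) set \<Rightarrow> ('b \<Rightarrow>\<^sub>0 int) set monoid"
  where "subquotient S Z B \<equiv> subgroup_generated (free_Abelian_group S) Z Mod B"

definition subquotient_data :: "'b set \<Rightarrow> ('b \<Rightarrow>\<^sub>0 int) set \<Rightarrow> ('b \<Rightarrow>\<^sub>0 int) set \<Rightarrow> bool" where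
  "subquotient_data S Z B \<longleftrightarrow>
     additive_subgroup Z \<and> Z \<subseteq> {c. Poly_Mapping.keys c \<subseteq> S} \<and> additive_subgroup B \<and> B \<subseteq> Z"

lemma additive_subgroup_0: "additive_subgroup B \<Longrightarrow> 0 \<in> B"
  by (simp add: additive_subgroup_def)

lemma additive_subgroup_diff: "additive_subgroup B \<Longrightarrow> x \<in> B \<Longrightarrow> y \<in> B \<Longrightarrow> x - y \<in> B"
  by (simp add: additive_subgroup_def)

lemma additive_subgroup_minus: "additive_subgroup B \<Longrightarrow> y \<in> B \<Longrightarrow> - y \<in> B"
  using additive_subgroup_diff[of B 0 y] by (simp add: additive_subgroup_def)

lemma additive_subgroup_add: "additive_subgroup B \<Longrightarrow> x \<in> B \<Longrightarrow> y \<in> B \<Longrightarrow> x + y \<in> B"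
  using additive_subgroup_diff[of B x "- y"] additive_subgroup_minus[of B y] by simp

lemma additive_0: "additive f \<Longrightarrow> f 0 = 0"
  unfolding additive_def by (metis add_0 add_cancel_right_right)

lemma additive_add: "additive f \<Longrightarrow> f (x + y) = f x + f y"
  unfolding additive_def by blast

lemma additive_diff: "additive f \<Longrightarrow> f (x - y) = f x - f y"
  unfolding additive_def by (metis diff_add_cancel eq_diff_eq)

lemma additive_id: "additive id"
  by (simp add: additive_def)

lemma additive_subgroup_image:
  assumes f: "additive f" and A: "additive_subgroup A"
  shows "additive_subgroup (f ` A)"
  unfolding additive_subgroup_def
proof (intro conjI ballI)
  show "0 \<in> f ` A"
    using additive_0[OF f] additive_subgroup_0[OF A] by force
  fix x y assume "x \<in> f ` A" "y \<in> f ` A"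
  then obtain a b where "a \<in> A" "b \<in> A" "x = f a" "y = f b" by blast
  then show "x - y \<in> f ` A"
    using additive_diff[OF f, of a b] additive_subgroup_diff[OF A] by (metis imageI)
qed

lemma additive_subgroup_kernel: "additive f \<Longrightarrow> additive_subgroup A \<Longrightarrow> additive_subgroup {c\<in>A. f c = 0}"
  unfolding additive_subgroup_def using additive_diff[of f] additive_0[of f] by auto

lemma subgroup_additive_subgroup:
  assumes "additive_subgroup A" "A \<subseteq> {c. Poly_Mapping.keys c \<subseteq> S}"
  shows "subgroup A (free_Abelian_group S)"
proof
  fix x y assume "x \<in> A" "y \<in> A"
  then show "x \<otimes>\<^bsub>free_Abelian_group S\<^esub> y \<in> A"
    using additive_subgroup_add[OF assms(1)] by simp
next
  fix x assume "x \<in> A"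
  then show "inv\<^bsub>free_Abelian_group S\<^esub> x \<in> A"
    using assms additive_subgroup_minus[OF assms(1)] by auto
qed (use assms additive_subgroup_0 in auto)

lemma add_coset_eq_iff:
  assumes "additive_subgroup B"
  shows "add_coset B x = add_coset B y \<longleftrightarrow> x - y \<in> B"
proof
  assume "add_coset B x = add_coset B y"
  moreover have "x \<in> add_coset B x"
    using additive_subgroup_0[OF assms] unfolding add_coset_def by force
  ultimately show "x - y \<in> B"
    unfolding add_coset_def by auto
next
  assume "x - y \<in> B"
  then have "h + x \<in> add_coset B y" "h + y \<in> add_coset B x" if "h \<in> B" for h
    using that additive_subgroup_add[OF assms] additive_subgroup_diff[OF assms]
    unfolding add_coset_def by (force simp: algebra_simps)+
  then show "add_coset B x = add_coset B y"
    unfolding add_coset_def by blast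
qed

lemma add_coset_0: "additive_subgroup B \<Longrightarrow> add_coset B 0 = B"
  unfolding add_coset_def by auto

lemma add_coset_set_mult:
  assumes "additive_subgroup B"
  shows "(\<Union>h1\<in>add_coset B x. \<Union>h2\<in>add_coset B y. {h1 + h2}) = add_coset B (x + y)"
proof
  show "(\<Union>h1\<in>add_coset B x. \<Union>h2\<in>add_coset B y. {h1 + h2}) \<subseteq> add_coset B (x + y)"
    using additive_subgroup_add[OF assms] unfolding add_coset_def by (force simp: algebra_simps)
  have "h + (x + y) = (h + x) + (0 + y)" for h
    by (simp add: algebra_simps)
  then show "add_coset B (x + y) \<subseteq> (\<Union>h1\<in>add_coset B x. \<Union>h2\<in>add_coset B y. {h1 + h2})"
    using additive_subgroup_0[OF assms] unfolding add_coset_def by blast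
qed

lemma subgroup_subquotient_data:
  assumes "subquotient_data S Z B"
  shows "subgroup Z (free_Abelian_group S)" "subgroup B (free_Abelian_group S)"
  using assms subgroup_additive_subgroup unfolding subquotient_data_def by blast+

lemma group_subquotient:
  assumes "subquotient_data S Z B"
  shows "group (subquotient S Z B)"
proof -
  let ?G = "free_Abelian_group S"
  interpret G: comm_group ?G
    by (rule abelian_free_Abelian_group)
  interpret H: comm_group "subgroup_generated ?G Z"
    by (rule G.abelian_subgroup_generated[OF abelian_free_Abelian_group])
  have "subgroup B (subgroup_generated ?G Z)"
    using assms subgroup_subquotient_data[OF assms] G.subgroup_subgroup_generated_iff[of B Z]
      subgroup.carrier_subgroup_generated_subgroup
    unfolding subquotient_data_def by metis
  then show ?thesis
    by (intro normal.factorgroup_is_group H.subgroup_imp_normal)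
qed

lemma carrier_subquotient:
  assumes "subquotient_data S Z B"
  shows "carrier (subquotient S Z B) = add_coset B ` Z"
proof -
  have "carrier (subgroup_generated (free_Abelian_group S) Z) = Z"
    by (rule subgroup.carrier_subgroup_generated_subgroup[OF subgroup_subquotient_data(1)[OF assms]])
  moreover have "B #>\<^bsub>subgroup_generated (free_Abelian_group S) Z\<^esub> a = add_coset B a" for a
    by (simp add: r_coset_def add_coset_def free_Abelian_group_def)
  ultimately show ?thesis
    unfolding FactGroup_def RCOSETS_def by auto
qed

lemma one_subquotient: "one (subquotient S Z B) = B"
  by (simp add: FactGroup_def)

lemma mult_subquotient:
  "additive_subgroup B \<Longrightarrow> add_coset B x \<otimes>\<^bsub>subquotient S Z B\<^esub> add_coset B y = add_coset B (x + y)"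
  by (simp add: FactGroup_def set_mult_def free_Abelian_group_def add_coset_set_mult)

lemma induced_map_coset:
  assumes "additive_subgroup B" "additive_subgroup B'" "additive f" "f ` B \<subseteq> B'"
  shows "induced_map B' f (add_coset B z) = add_coset B' (f z)"
proof -
  have "induced_map B' f (add_coset B z) = (\<Union>h\<in>B. add_coset B' (f h + f z))"
    unfolding induced_map_def add_coset_def using additive_add[OF assms(3)] by auto
  also have "\<dots> = (\<Union>h\<in>B. add_coset B' (f z))"
    using assms(4) add_coset_eq_iff[OF assms(2)] by (intro SUP_cong) auto
  also have "\<dots> = add_coset B' (f z)"
    using additive_subgroup_0[OF assms(1)] by auto
  finally show ?thesis .
qed

lemma induced_map_hom:
  assumes ZB: "subquotient_data S Z B" and ZB': "subquotient_data S' Z' B'"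
    and f: "additive f" "f ` Z \<subseteq> Z'" "f ` B \<subseteq> B'"
  shows "induced_map B' f \<in> hom (subquotient S Z B) (subquotient S' Z' B')"
proof (rule homI)
  have B: "additive_subgroup B" and B': "additive_subgroup B'"
    using ZB ZB' by (simp_all add: subquotient_data_def)
  note f_coset = induced_map_coset[OF B B' f(1) f(3)]
  show "induced_map B' f X \<in> carrier (subquotient S' Z' B')"
    if "X \<in> carrier (subquotient S Z B)" for X
    using that f(2) f_coset by (auto simp: carrier_subquotient[OF ZB] carrier_subquotient[OF ZB'])
  fix X Y assume "X \<in> carrier (subquotient S Z B)" "Y \<in> carrier (subquotient S Z B)"
  then obtain x y where "x \<in> Z" "X = add_coset B x" "y \<in> Z" "Y = add_coset B y"
    by (auto simp: carrier_subquotient[OF ZB])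
  then show "induced_map B' f (X \<otimes>\<^bsub>subquotient S Z B\<^esub> Y)
          = induced_map B' f X \<otimes>\<^bsub>subquotient S' Z' B'\<^esub> induced_map B' f Y"
    by (simp only: f_coset mult_subquotient[OF B] mult_subquotient[OF B'] additive_add[OF f(1)])
qed

lemma kernel_induced_map:
  assumes ZB1: "subquotient_data S1 Z1 B1" and ZB2: "subquotient_data S2 Z2 B2"
    and ZB3: "subquotient_data S3 Z3 B3"
    and f: "additive f" "f ` Z1 \<subseteq> Z2" "f ` B1 \<subseteq> B2"
    and g: "additive g" "g ` Z2 \<subseteq> Z3" "g ` B2 \<subseteq> B3"
    and exact: "\<And>z. z \<in> Z2 \<Longrightarrow> g z \<in> B3 \<longleftrightarrow> (\<exists>z1\<in>Z1. z - f z1 \<in> B2)"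
  shows "kernel (subquotient S2 Z2 B2) (subquotient S3 Z3 B3) (induced_map B3 g)
           = induced_map B2 f ` carrier (subquotient S1 Z1 B1)"
proof -
  have B: "additive_subgroup B1" "additive_subgroup B2" "additive_subgroup B3"
    using ZB1 ZB2 ZB3 by (simp_all add: subquotient_data_def)
  note f_coset = induced_map_coset[OF B(1,2) f(1) f(3)]
    and g_coset = induced_map_coset[OF B(2,3) g(1) g(3)]
  have kernel_iff: "add_coset B3 (g z) = B3 \<longleftrightarrow> g z \<in> B3" for z
    using add_coset_eq_iff[OF B(3), of "g z" 0] add_coset_0[OF B(3)] by simp
  show ?thesis
  proof (intro equalityI subsetI)
    fix X assume "X \<in> kernel (subquotient S2 Z2 B2) (subquotient S3 Z3 B3) (induced_map B3 g)"
    then obtain z where z: "z \<in> Z2" "X = add_coset B2 z" "g z \<in> B3"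
      unfolding kernel_def carrier_subquotient[OF ZB2] one_subquotient by (auto simp: g_coset kernel_iff)
    then obtain z1 where "z1 \<in> Z1" "z - f z1 \<in> B2"
      using exact by blast
    moreover from this have "X = induced_map B2 f (add_coset B1 z1)"
      using z(2) f_coset add_coset_eq_iff[OF B(2)] by simp
    ultimately show "X \<in> induced_map B2 f ` carrier (subquotient S1 Z1 B1)"
      by (auto simp: carrier_subquotient[OF ZB1])
  next
    fix X assume "X \<in> induced_map B2 f ` carrier (subquotient S1 Z1 B1)"
    then obtain z1 where z1: "z1 \<in> Z1" "X = add_coset B2 (f z1)"
      using f_coset by (auto simp: carrier_subquotient[OF ZB1])
    have "f z1 - f z1 \<in> B2"
      using additive_subgroup_0[OF B(2)] by simp
    then have "g (f z1) \<in> B3"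
      using exact[of "f z1"] f(2) z1(1) by blast
    then show "X \<in> kernel (subquotient S2 Z2 B2) (subquotient S3 Z3 B3) (induced_map B3 g)"
      using z1 f(2) unfolding kernel_def carrier_subquotient[OF ZB2] one_subquotient
      by (auto simp: g_coset kernel_iff)
  qed
qed

definition simplicial_complex :: "'a set set \<Rightarrow> bool" where
  "simplicial_complex K \<longleftrightarrow> (\<forall>\<sigma>\<in>K. finite \<sigma>) \<and> (\<forall>\<sigma>\<in>K. \<forall>\<tau>. \<tau> \<subseteq> \<sigma> \<longrightarrow> \<tau> \<in> K)"

abbreviation simp_chains :: "'a set set \<Rightarrow> int \<Rightarrow> ('a set \<Rightarrow>\<^sub>0 int) set" where
  "simp_chains K n \<equiv> {c. Poly_Mapping.keys c \<subseteq> simp_faces K n}"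

lemma simplicial_complex_Ind: "finite V \<Longrightarrow> simplicial_complex (Ind V C)"
  unfolding simplicial_complex_def Ind_def by (auto intro: finite_subset)

lemma additive_boundary: "additive simp_boundary"
  by (simp add: additive_def boundary_add)

lemma keys_boundary:
  "Poly_Mapping.keys (simp_boundary c) \<subseteq> (\<Union>\<sigma>\<in>Poly_Mapping.keys c. (\<lambda>v. \<sigma> - {v}) ` \<sigma>)"
proof -
  have "Poly_Mapping.keys (simp_bd_simplex \<sigma>) \<subseteq> (\<lambda>v. \<sigma> - {v}) ` \<sigma>" for \<sigma> :: "'a set"
    unfolding simp_bd_simplex_def by (rule order_trans[OF keys_sum]) auto
  then show ?thesis
    unfolding simp_boundary_def by (intro order_trans[OF keys_frag_extend] UN_mono) auto
qed

lemma boundary_simp_chains: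
  assumes K: "simplicial_complex K" and c: "c \<in> simp_chains K (n + 1)"
  shows "simp_boundary c \<in> simp_chains K n"
proof clarify
  fix \<tau> assume "\<tau> \<in> Poly_Mapping.keys (simp_boundary c)"
  then obtain \<sigma> v where \<sigma>: "\<sigma> \<in> Poly_Mapping.keys c" "v \<in> \<sigma>" "\<tau> = \<sigma> - {v}"
    using keys_boundary by blast
  then have "\<sigma> \<in> K" "int (card \<sigma>) = n + 2"
    using c by (auto simp: simp_faces_def)
  moreover from \<open>\<sigma> \<in> K\<close> have "\<tau> \<in> K" "finite \<sigma>"
    using K \<sigma>(3) unfolding simplicial_complex_def by blast+
  moreover from this have "Suc (card \<tau>) = card \<sigma>"
    unfolding \<sigma>(3) using \<sigma>(2) by (intro card_Suc_Diff1)
  ultimately show "\<tau> \<in> simp_faces K n"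
    by (simp add: simp_faces_def)
qed

lemma additive_subgroup_simp_chains: "additive_subgroup (simp_chains K n)"
  unfolding additive_subgroup_def
proof (intro conjI ballI)
  fix x y assume "x \<in> simp_chains K n" "y \<in> simp_chains K n"
  then show "x - y \<in> simp_chains K n"
    using keys_diff[of x y] by blast
qed simp

lemma simp_cycles_eq: "simp_cycles K n = {c \<in> simp_chains K n. simp_boundary c = 0}"
  by (simp add: simp_cycles_def simp_chain_group_def)

lemma simp_boundaries_eq: "simp_boundaries K n = simp_boundary ` simp_chains K (n + 1)"
  by (simp add: simp_boundaries_def simp_chain_group_def free_Abelian_group_def)

lemma reduced_homology_eq:
  "reduced_homology K n = subquotient (simp_faces K n) (simp_cycles K n) (simp_boundaries K n)"
  by (simp add: reduced_homology_def simp_chain_group_def)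

lemma subquotient_data_homology:
  assumes "simplicial_complex K"
  shows "subquotient_data (simp_faces K n) (simp_cycles K n) (simp_boundaries K n)"
  unfolding subquotient_data_def
proof (intro conjI)
  show "additive_subgroup (simp_cycles K n)"
    unfolding simp_cycles_eq
    by (rule additive_subgroup_kernel[OF additive_boundary additive_subgroup_simp_chains])
  show "additive_subgroup (simp_boundaries K n)"
    unfolding simp_boundaries_eq
    by (rule additive_subgroup_image[OF additive_boundary additive_subgroup_simp_chains])
  show "simp_boundaries K n \<subseteq> simp_cycles K n"
    unfolding simp_boundaries_eq simp_cycles_eq
    using boundary_simp_chains[OF assms] boundary_boundary by blast
qed (auto simp: simp_cycles_eq)

lemma group_reduced_homology: "simplicial_complex K \<Longrightarrow> group (reduced_homology K n)"
  unfolding reduced_homology_eq by (rule group_subquotient[OF subquotient_data_homology])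

lemma induced_map_hom_reduced_homology:
  assumes "simplicial_complex K" "simplicial_complex K'" "additive f"
    "f ` simp_cycles K n \<subseteq> simp_cycles K' n'" "f ` simp_boundaries K n \<subseteq> simp_boundaries K' n'"
  shows "induced_map (simp_boundaries K' n') f \<in> hom (reduced_homology K n) (reduced_homology K' n')"
  unfolding reduced_homology_eq
  by (rule induced_map_hom[OF subquotient_data_homology[OF assms(1)]
        subquotient_data_homology[OF assms(2)] assms(3-5)])

lemma exact_seq_reduced_homology:
  assumes K: "simplicial_complex K1" "simplicial_complex K2" "simplicial_complex K3"
    and f: "additive f" "f ` simp_cycles K1 n1 \<subseteq> simp_cycles K2 n2"
      "f ` simp_boundaries K1 n1 \<subseteq> simp_boundaries K2 n2"
    and g: "additive g" "g ` simp_cycles K2 n2 \<subseteq> simp_cycles K3 n3"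
      "g ` simp_boundaries K2 n2 \<subseteq> simp_boundaries K3 n3"
    and exact: "\<And>z. z \<in> simp_cycles K2 n2 \<Longrightarrow> g z \<in> simp_boundaries K3 n3 \<longleftrightarrow>
      (\<exists>z1\<in>simp_cycles K1 n1. z - f z1 \<in> simp_boundaries K2 n2)"
  shows "exact_seq ([reduced_homology K3 n3, reduced_homology K2 n2, reduced_homology K1 n1],
                    [induced_map (simp_boundaries K3 n3) g, induced_map (simp_boundaries K2 n2) f])"
proof -
  have "group_hom (reduced_homology K1 n1) (reduced_homology K2 n2) (induced_map (simp_boundaries K2 n2) f)"
    using group_reduced_homology[OF K(1)] group_reduced_homology[OF K(2)]
      induced_map_hom_reduced_homology[OF K(1,2) f]
    by (simp add: group_hom_def group_hom_axioms_def)
  then have seq: "exact_seq ([reduced_homology K2 n2, reduced_homology K1 n1],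
                             [induced_map (simp_boundaries K2 n2) f])"
    by (rule exact_seq.unity)
  have "kernel (reduced_homology K2 n2) (reduced_homology K3 n3) (induced_map (simp_boundaries K3 n3) g)
      = induced_map (simp_boundaries K2 n2) f ` carrier (reduced_homology K1 n1)"
    unfolding reduced_homology_eq
    by (rule kernel_induced_map[OF subquotient_data_homology[OF K(1)] subquotient_data_homology[OF K(2)]
          subquotient_data_homology[OF K(3)] f g exact])
  from exact_seq.extension[OF seq group_reduced_homology[OF K(3)]
      induced_map_hom_reduced_homology[OF K(2,3) g] this]
  show ?thesis by simp
qed

section \<open>Joining a face and removing it\<close>

text \<open>\<open>join_sign F \<tau>\<close> is the sign of the permutation sorting the vertices of \<open>\<tau>\<close> followed by
  those of \<open>F\<close>; it is what makes the removal of \<open>F\<close> commute with the boundary.\<close>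

definition join_sign :: "'a::linorder set \<Rightarrow> 'a set \<Rightarrow> int" where
  "join_sign F \<tau> = (-1) ^ card {(f,t). f \<in> F \<and> t \<in> \<tau> \<and> f < t}"

definition join_chain :: "'a::linorder set \<Rightarrow> ('a set \<Rightarrow>\<^sub>0 int) \<Rightarrow> ('a set \<Rightarrow>\<^sub>0 int)" where
  "join_chain F = frag_extend (\<lambda>\<tau>. frag_cmul (join_sign F \<tau>) (frag_of (F \<union> \<tau>)))"

definition link_chain :: "'a::linorder set \<Rightarrow> ('a set \<Rightarrow>\<^sub>0 int) \<Rightarrow> ('a set \<Rightarrow>\<^sub>0 int)" where
  "link_chain F =
     frag_extend (\<lambda>\<sigma>. if F \<subseteq> \<sigma> then frag_cmul (join_sign F (\<sigma> - F)) (frag_of (\<sigma> - F)) else 0)"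

lemma join_sign_squared: "join_sign F \<tau> * join_sign F \<tau> = 1"
  by (simp add: join_sign_def flip: power_add)

lemma additive_join_chain: "additive (join_chain F)"
  by (simp add: additive_def join_chain_def frag_extend_add)

lemma additive_link_chain: "additive (link_chain F)"
  by (simp add: additive_def link_chain_def frag_extend_add)

lemma join_chain_frag_of: "join_chain F (frag_of \<tau>) = frag_cmul (join_sign F \<tau>) (frag_of (F \<union> \<tau>))"
  by (simp add: join_chain_def)

lemma link_chain_frag_of:
  "link_chain F (frag_of \<sigma>) =
     (if F \<subseteq> \<sigma> then frag_cmul (join_sign F (\<sigma> - F)) (frag_of (\<sigma> - F)) else 0)"
  by (simp add: link_chain_def)

lemma link_chain_cmul: "link_chain F (frag_cmul c x) = frag_cmul c (link_chain F x)"
  by (simp add: link_chain_def frag_extend_cmul)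

lemma join_chain_cmul: "join_chain F (frag_cmul c x) = frag_cmul c (join_chain F x)"
  by (simp add: join_chain_def frag_extend_cmul)

lemma link_chain_sum: "finite I \<Longrightarrow> link_chain F (\<Sum>i\<in>I. g i) = (\<Sum>i\<in>I. link_chain F (g i))"
  by (simp add: link_chain_def frag_extend_sum o_def)

lemma link_chain_0 [simp]: "link_chain F 0 = 0"
  by (simp add: link_chain_def)

lemma join_chain_0 [simp]: "join_chain F 0 = 0"
  by (simp add: join_chain_def)

lemma link_join_chain_frag_of:
  assumes "\<tau> \<inter> F = {}"
  shows "link_chain F (join_chain F (frag_of \<tau>)) = frag_of \<tau>"
proof -
  have "(F \<union> \<tau>) - F = \<tau>"
    using assms by auto
  then show ?thesis
    by (simp add: join_chain_frag_of link_chain_cmul link_chain_frag_of join_sign_squared)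
qed

lemma link_join_chain:
  assumes "\<forall>\<tau>\<in>Poly_Mapping.keys c. \<tau> \<inter> F = {}"
  shows "link_chain F (join_chain F c) = c"
proof -
  have "link_chain F (join_chain F c) = frag_extend (\<lambda>\<tau>. link_chain F (join_chain F (frag_of \<tau>))) c"
    unfolding join_chain_def link_chain_def frag_extend_extend by simp
  also have "\<dots> = frag_extend frag_of c"
  proof (rule frag_extend_eq)
    fix \<tau> assume "\<tau> \<in> Poly_Mapping.keys c"
    then have "\<tau> \<inter> F = {}" using assms by blast
    then show "link_chain F (join_chain F (frag_of \<tau>)) = frag_of \<tau>" by (rule link_join_chain_frag_of)
  qed
  finally show ?thesis by (simp flip: frag_expansion)
qed

definition superface_part :: "'a set \<Rightarrow> ('a set \<Rightarrow>\<^sub>0 int) \<Rightarrow> ('a set \<Rightarrow>\<^sub>0 int)" where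
  "superface_part F = frag_extend (\<lambda>\<sigma>. if F \<subseteq> \<sigma> then frag_of \<sigma> else 0)"

lemma join_link_chain: "join_chain F (link_chain F c) = superface_part F c"
proof -
  have "join_chain F (link_chain F c) = frag_extend (\<lambda>\<sigma>. join_chain F (link_chain F (frag_of \<sigma>))) c"
    unfolding join_chain_def link_chain_def frag_extend_extend by simp
  also have "\<dots> = superface_part F c"
    unfolding superface_part_def
    by (rule frag_extend_eq)
      (auto simp: link_chain_frag_of join_chain_cmul join_chain_frag_of join_sign_squared sup.absorb2)
  finally show ?thesis .
qed

lemma keys_superface_part: "Poly_Mapping.keys (superface_part F c) \<subseteq> Poly_Mapping.keys c"
  unfolding superface_part_def by (rule order_trans[OF keys_frag_extend]) (auto split: if_split_asm)

lemma lookup_superface_part: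
  "Poly_Mapping.lookup (superface_part F c) \<sigma> = (if F \<subseteq> \<sigma> then Poly_Mapping.lookup c \<sigma> else 0)"
  using subset_UNIV
  by (induction c rule: frag_induction) (auto simp: superface_part_def frag_extend_diff lookup_minus)

lemma link_chain_eq_0_keys:
  assumes "link_chain F x = 0" "\<sigma> \<in> Poly_Mapping.keys x"
  shows "\<not> F \<subseteq> \<sigma>"
proof
  assume "F \<subseteq> \<sigma>"
  have "superface_part F x = 0" using join_link_chain[of F x] assms(1) by simp
  then have "Poly_Mapping.lookup x \<sigma> = 0" using lookup_superface_part[of F x \<sigma>] \<open>F \<subseteq> \<sigma>\<close> by simp
  then show False using assms(2) by (simp add: in_keys_iff)
qed

lemma link_chain_eq_0:
  assumes "\<forall>\<sigma>\<in>Poly_Mapping.keys x. \<not> F \<subseteq> \<sigma>"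
  shows "link_chain F x = 0"
  unfolding link_chain_def by (rule frag_extend_eq_0) (use assms in auto)

lemma keys_join_chain:
  "Poly_Mapping.keys (join_chain F c) \<subseteq> (\<lambda>\<tau>. F \<union> \<tau>) ` Poly_Mapping.keys c"
  unfolding join_chain_def by (rule order_trans[OF keys_frag_extend]) auto

lemma keys_link_chain:
  "Poly_Mapping.keys (link_chain F c) \<subseteq> (\<lambda>\<sigma>. \<sigma> - F) ` {\<sigma>\<in>Poly_Mapping.keys c. F \<subseteq> \<sigma>}"
  unfolding link_chain_def by (rule order_trans[OF keys_frag_extend]) (auto split: if_split_asm)

lemma face_sign_join_sign:
  fixes F \<sigma> :: "'a::linorder set"
  assumes fin: "finite \<sigma>" and F: "F \<subseteq> \<sigma>" and v: "v \<in> \<sigma> - F"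
  shows "face_sign \<sigma> v * join_sign F (\<sigma> - F - {v}) = join_sign F (\<sigma> - F) * face_sign (\<sigma> - F) v"
proof -
  let ?\<tau> = "\<sigma> - F"
  have finF: "finite F" using fin F finite_subset by blast
  have u: "{u\<in>\<sigma>. u < v} = {u\<in>?\<tau>. u < v} \<union> {u\<in>F. u < v}" using F by auto
  have c1: "card {u\<in>\<sigma>. u < v} = card {u\<in>?\<tau>. u < v} + card {u\<in>F. u < v}"
    unfolding u by (rule card_Un_disjoint) (use fin finF in auto)
  let ?A = "{(f,t). f \<in> F \<and> t \<in> ?\<tau> - {v} \<and> f < t}"
  let ?B = "(\<lambda>f. (f,v)) ` {u\<in>F. u < v}"
  have s: "{(f,t). f \<in> F \<and> t \<in> ?\<tau> \<and> f < t} = ?A \<union> ?B" using v by auto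
  have finA: "finite ?A"
    by (rule finite_subset[of _ "F \<times> \<sigma>"]) (use fin finF in auto)
  have c2: "card {(f,t). f \<in> F \<and> t \<in> ?\<tau> \<and> f < t} = card ?A + card {u\<in>F. u < v}"
    unfolding s
    by (subst card_Un_disjoint) (use finA finF in \<open>auto simp: card_image inj_on_def\<close>)
  show ?thesis
    unfolding face_sign_def join_sign_def c1 c2 by (simp add: power_add mult_ac)
qed

lemma link_chain_boundary_frag_of:
  fixes F :: "'a::linorder set"
  assumes finF: "finite F"
  shows "link_chain F (simp_boundary (frag_of \<sigma>)) = simp_boundary (link_chain F (frag_of \<sigma>))"
proof (cases "finite \<sigma>")
  case False
  then have "infinite (\<sigma> - F)" using finF by auto
  then show ?thesis using False
    by (simp add: boundary_frag_of link_chain_frag_of simp_bd_simplex_def boundary_cmul)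
next
  case fin: True
  have lhs: "link_chain F (simp_boundary (frag_of \<sigma>)) =
      (\<Sum>v\<in>\<sigma>. frag_cmul (face_sign \<sigma> v) (link_chain F (frag_of (\<sigma> - {v}))))"
    using fin by (simp add: boundary_frag_of simp_bd_simplex_face_sign link_chain_sum link_chain_cmul)
  show ?thesis
  proof (cases "F \<subseteq> \<sigma>")
    case False
    then have "link_chain F (frag_of (\<sigma> - {v})) = 0" for v by (auto simp: link_chain_frag_of)
    then show ?thesis using lhs False by (simp add: link_chain_frag_of)
  next
    case True
    let ?\<tau> = "\<sigma> - F"
    have "(\<Sum>v\<in>\<sigma>. frag_cmul (face_sign \<sigma> v) (link_chain F (frag_of (\<sigma> - {v}))))
        = (\<Sum>v\<in>?\<tau>. frag_cmul (face_sign \<sigma> v) (link_chain F (frag_of (\<sigma> - {v}))))"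
    proof (rule sum.mono_neutral_right)
      show "finite \<sigma>" by (rule fin)
      show "?\<tau> \<subseteq> \<sigma>" by auto
      show "\<forall>i\<in>\<sigma> - ?\<tau>. frag_cmul (face_sign \<sigma> i) (link_chain F (frag_of (\<sigma> - {i}))) = 0"
        by (auto simp: link_chain_frag_of)
    qed
    also have "\<dots> = (\<Sum>v\<in>?\<tau>. frag_cmul (join_sign F ?\<tau> * face_sign ?\<tau> v) (frag_of (?\<tau> - {v})))"
    proof (rule sum.cong[OF refl])
      fix v assume v: "v \<in> ?\<tau>"
      then have "F \<subseteq> \<sigma> - {v}" "\<sigma> - {v} - F = \<sigma> - F - {v}" using True by auto
      then show "frag_cmul (face_sign \<sigma> v) (link_chain F (frag_of (\<sigma> - {v}))) =
                 frag_cmul (join_sign F ?\<tau> * face_sign ?\<tau> v) (frag_of (?\<tau> - {v}))"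
        using face_sign_join_sign[OF fin True v] by (simp add: link_chain_frag_of)
    qed
    also have "\<dots> = simp_boundary (link_chain F (frag_of \<sigma>))"
      using True fin by (simp add: link_chain_frag_of boundary_cmul boundary_frag_of
          simp_bd_simplex_face_sign frag_cmul_sum)
    finally show ?thesis using lhs by simp
  qed
qed

lemma link_chain_boundary:
  fixes F :: "'a::linorder set"
  assumes finF: "finite F"
  shows "link_chain F (simp_boundary c) = simp_boundary (link_chain F c)"
  using subset_UNIV
  by (induction c rule: frag_induction)
    (simp_all add: link_chain_boundary_frag_of[OF finF] boundary_diff additive_diff[OF additive_link_chain])

locale hypergraph_edge =
  fixes V :: "'a::linorder set" and C :: "'a set set" and F :: "'a set"
  assumes hypergraph: "hypergraph V C" and edge: "F \<in> C"
begin

abbreviation "Ind_C \<equiv> Ind V C"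
abbreviation "Ind_del \<equiv> Ind V (hdel C F)"
abbreviation "Ind_colon \<equiv> Ind (hcolon_vertices V C F) (hcolon_edges C F)"

lemma finite_V: "finite V"
  using hypergraph by (simp add: hypergraph_def)

lemma edge_subset_V: "E \<in> C \<Longrightarrow> E \<subseteq> V"
  using hypergraph by (simp add: hypergraph_def)

lemma edges_incomparable: "E \<in> C \<Longrightarrow> E' \<in> C \<Longrightarrow> E \<subseteq> E' \<Longrightarrow> E = E'"
  using hypergraph by (simp add: hypergraph_def)

lemma finite_F: "finite F"
  using edge_subset_V[OF edge] finite_V finite_subset by blast

lemma finite_C: "finite C"
  by (rule finite_subset[of _ "Pow V"]) (use edge_subset_V finite_V in auto)

lemma simplicial_complex_Ind_C: "simplicial_complex Ind_C"
  by (rule simplicial_complex_Ind[OF finite_V])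

lemma simplicial_complex_Ind_del: "simplicial_complex Ind_del"
  by (rule simplicial_complex_Ind[OF finite_V])

lemma simplicial_complex_Ind_colon: "simplicial_complex Ind_colon"
  using finite_V by (intro simplicial_complex_Ind) (simp add: hcolon_vertices_def)

lemma Ind_C_subset_Ind_del: "Ind_C \<subseteq> Ind_del"
  unfolding Ind_def hdel_def by auto

lemma Ind_delD: "\<sigma> \<in> Ind_del \<Longrightarrow> \<not> F \<subseteq> \<sigma> \<Longrightarrow> \<sigma> \<in> Ind_C"
  unfolding Ind_def hdel_def by auto

lemma edge_not_subset_Ind_C: "\<sigma> \<in> Ind_C \<Longrightarrow> \<not> F \<subseteq> \<sigma>"
  unfolding Ind_def using edge by auto

text \<open>Take \<open>A\<close> minimal among the sets \<open>E' - F\<close> below \<open>E - F\<close>; it is nonempty by incomparability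
  of the edges, and its size decides between the two cases.\<close>

lemma colon_edge_or_neighbour_below:
  assumes "E \<in> hdel C F"
  obtains A where "A \<noteq> {}" "A \<subseteq> E - F" "A \<in> hcolon_edges C F \<or> A \<subseteq> hnbhd C F"
proof -
  let ?M = "{E - F | E. E \<in> hdel C F}"
  have "finite ?M" "E - F \<in> ?M"
    using finite_C assms by (auto simp: hdel_def)
  from finite_has_minimal2[OF this]
  obtain A where A: "A \<in> ?M" "A \<subseteq> E - F" and minimal: "\<forall>B\<in>?M. B \<subseteq> A \<longrightarrow> A = B"
    by blast
  then obtain E' where E': "E' \<in> C" "E' \<noteq> F" "A = E' - F"
    by (auto simp: hdel_def)
  have "A \<noteq> {}"
    using edges_incomparable[OF E'(1) edge] E' by auto
  moreover have "A \<in> hcolon_edges C F \<or> A \<subseteq> hnbhd C F"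
  proof (cases "card A \<ge> 2")
    case True
    then show ?thesis
      using A minimal unfolding hcolon_edges_def Let_def by blast
  next
    case False
    have "finite A"
      using E' edge_subset_V finite_V finite_subset by blast
    with \<open>A \<noteq> {}\<close> False have "card A = 1"
      using card_gt_0_iff[of A] by linarith
    then show ?thesis
      using E' unfolding hnbhd_def by blast
  qed
  ultimately show ?thesis
    using that A(2) by blast
qed

lemma Ind_colon_join:
  assumes "\<tau> \<in> Ind_colon"
  shows "\<tau> \<inter> F = {}" "F \<union> \<tau> \<in> Ind_del"
proof -
  have \<tau>: "\<tau> \<subseteq> V - (F \<union> hnbhd C F)" "\<forall>A\<in>hcolon_edges C F. \<not> A \<subseteq> \<tau>"
    using assms by (auto simp: Ind_def hcolon_vertices_def)
  then show "\<tau> \<inter> F = {}"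
    by auto
  have "\<not> E \<subseteq> F \<union> \<tau>" if E: "E \<in> hdel C F" for E
  proof
    assume "E \<subseteq> F \<union> \<tau>"
    obtain A where "A \<noteq> {}" "A \<subseteq> E - F" "A \<in> hcolon_edges C F \<or> A \<subseteq> hnbhd C F"
      by (rule colon_edge_or_neighbour_below[OF E])
    with \<open>E \<subseteq> F \<union> \<tau>\<close> \<tau> show False
      by blast
  qed
  then show "F \<union> \<tau> \<in> Ind_del"
    using edge_subset_V[OF edge] \<tau>(1) unfolding Ind_def by blast
qed

lemma Diff_edge_mem_Ind_colon:
  assumes \<sigma>: "\<sigma> \<in> Ind_del" and "F \<subseteq> \<sigma>"
  shows "\<sigma> - F \<in> Ind_colon"
proof -
  have "\<sigma> \<subseteq> V" and no_edge: "\<forall>E\<in>hdel C F. \<not> E \<subseteq> \<sigma>"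
    using \<sigma> by (auto simp: Ind_def)
  have "\<sigma> \<inter> hnbhd C F = {}"
  proof (rule ccontr)
    assume "\<sigma> \<inter> hnbhd C F \<noteq> {}"
    then obtain v E where v: "v \<in> \<sigma>" "E \<in> C" "card (E - F) = 1" "v \<in> E - F"
      unfolding hnbhd_def by blast
    then have "E - F = {v}"
      by (metis card_1_singletonE singletonD)
    then have "E \<subseteq> \<sigma>" "E \<noteq> F"
      using \<open>F \<subseteq> \<sigma>\<close> v by auto
    then show False
      using no_edge v(2) by (auto simp: hdel_def)
  qed
  then have "\<sigma> - F \<subseteq> hcolon_vertices V C F"
    using \<open>\<sigma> \<subseteq> V\<close> by (auto simp: hcolon_vertices_def)
  moreover have "\<not> A \<subseteq> \<sigma> - F" if "A \<in> hcolon_edges C F" for A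
  proof
    assume "A \<subseteq> \<sigma> - F"
    obtain E where "E \<in> hdel C F" "A = E - F"
      using \<open>A \<in> hcolon_edges C F\<close> unfolding hcolon_edges_def Let_def by blast
    with \<open>A \<subseteq> \<sigma> - F\<close> \<open>F \<subseteq> \<sigma>\<close> no_edge show False
      by blast
  qed
  ultimately show ?thesis
    unfolding Ind_def by blast
qed

section \<open>The short exact sequence of chain complexes\<close>

abbreviation "nF \<equiv> int (card F)"

lemma join_chain_simp_chains:
  assumes c: "c \<in> simp_chains Ind_colon j" and m: "m = j + nF"
  shows "join_chain F c \<in> simp_chains Ind_del m"
proof clarify
  fix \<sigma> assume "\<sigma> \<in> Poly_Mapping.keys (join_chain F c)"
  then obtain \<tau> where \<tau>: "\<tau> \<in> Poly_Mapping.keys c" "\<sigma> = F \<union> \<tau>"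
    using keys_join_chain by blast
  then have "\<tau> \<in> Ind_colon" "int (card \<tau>) = j + 1"
    using c by (auto simp: simp_faces_def)
  moreover from this have "card \<sigma> = card F + card \<tau>"
    using simplicial_complex_Ind_colon finite_F Ind_colon_join(1) \<tau>(2)
    by (auto simp: simplicial_complex_def intro: card_Un_disjoint)
  ultimately show "\<sigma> \<in> simp_faces Ind_del m"
    using Ind_colon_join(2) \<tau>(2) m by (auto simp: simp_faces_def)
qed

lemma link_chain_simp_chains:
  assumes c: "c \<in> simp_chains Ind_del i" and m: "m = i - nF"
  shows "link_chain F c \<in> simp_chains Ind_colon m"
proof clarify
  fix \<tau> assume "\<tau> \<in> Poly_Mapping.keys (link_chain F c)"
  then obtain \<sigma> where \<sigma>: "\<sigma> \<in> Poly_Mapping.keys c" "F \<subseteq> \<sigma>" "\<tau> = \<sigma> - F"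
    using keys_link_chain by blast
  then have "\<sigma> \<in> Ind_del" "int (card \<sigma>) = i + 1"
    using c by (auto simp: simp_faces_def)
  moreover from this have "card \<tau> + card F = card \<sigma>"
    using simplicial_complex_Ind_del \<sigma>(2,3) finite_F
    by (auto simp: simplicial_complex_def card_Diff_subset card_mono)
  ultimately show "\<tau> \<in> simp_faces Ind_colon m"
    using Diff_edge_mem_Ind_colon \<sigma>(2,3) m by (auto simp: simp_faces_def)
qed

lemma simp_chains_Ind_C_Ind_del: "c \<in> simp_chains Ind_C i \<Longrightarrow> c \<in> simp_chains Ind_del i"
  using Ind_C_subset_Ind_del by (auto simp: simp_faces_def)

lemma simp_chains_Ind_CI:
  "c \<in> simp_chains Ind_del i \<Longrightarrow> link_chain F c = 0 \<Longrightarrow> c \<in> simp_chains Ind_C i"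
  using Ind_delD link_chain_eq_0_keys by (fastforce simp: simp_faces_def)

lemma link_chain_Ind_C: "c \<in> simp_chains Ind_C i \<Longrightarrow> link_chain F c = 0"
  by (rule link_chain_eq_0) (use edge_not_subset_Ind_C in \<open>auto simp: simp_faces_def\<close>)

lemma link_join_chain_Ind_colon: "c \<in> simp_chains Ind_colon j \<Longrightarrow> link_chain F (join_chain F c) = c"
  by (rule link_join_chain) (use Ind_colon_join(1) in \<open>auto simp: simp_faces_def\<close>)

lemma link_join_link_chain: "link_chain F (join_chain F (link_chain F c)) = link_chain F c"
  by (rule link_join_chain) (use keys_link_chain in blast)

lemma chain_diff_join_link:
  assumes c: "c \<in> simp_chains Ind_del i"
  shows "c - join_chain F (link_chain F c) \<in> simp_chains Ind_C i"
proof (rule simp_chains_Ind_CI)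
  have "Poly_Mapping.keys (c - join_chain F (link_chain F c)) \<subseteq> Poly_Mapping.keys c"
    using keys_diff[of c "join_chain F (link_chain F c)"] keys_superface_part[of F c]
    by (auto simp: join_link_chain)
  then show "c - join_chain F (link_chain F c) \<in> simp_chains Ind_del i"
    using c by blast
  show "link_chain F (c - join_chain F (link_chain F c)) = 0"
    by (simp add: additive_diff[OF additive_link_chain] link_join_link_chain)
qed

lemma join_chain_boundary_commute:
  assumes w: "w \<in> simp_chains Ind_colon (j + 1)" and k: "k = j + nF"
  shows "join_chain F (simp_boundary w) - simp_boundary (join_chain F w) \<in> simp_chains Ind_C k"
proof (rule simp_chains_Ind_CI)
  have bw: "simp_boundary w \<in> simp_chains Ind_colon j"
    by (rule boundary_simp_chains[OF simplicial_complex_Ind_colon w])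
  have "join_chain F w \<in> simp_chains Ind_del (k + 1)"
    by (rule join_chain_simp_chains[OF w]) (simp add: k)
  then have "simp_boundary (join_chain F w) \<in> simp_chains Ind_del k"
    by (rule boundary_simp_chains[OF simplicial_complex_Ind_del])
  with join_chain_simp_chains[OF bw k]
  show "join_chain F (simp_boundary w) - simp_boundary (join_chain F w) \<in> simp_chains Ind_del k"
    by (rule additive_subgroup_diff[OF additive_subgroup_simp_chains])
  show "link_chain F (join_chain F (simp_boundary w) - simp_boundary (join_chain F w)) = 0"
    by (simp add: additive_diff[OF additive_link_chain] link_chain_boundary[OF finite_F]
        link_join_chain_Ind_colon[OF bw] link_join_chain_Ind_colon[OF w])
qed

section \<open>The long exact sequence\<close>

abbreviation connecting :: "('a set \<Rightarrow>\<^sub>0 int) \<Rightarrow> ('a set \<Rightarrow>\<^sub>0 int)" where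
  "connecting y \<equiv> simp_boundary (join_chain F y)"

lemma additive_connecting: "additive connecting"
  by (simp add: additive_def additive_add[OF additive_join_chain] boundary_add)

lemma connecting_cycles:
  assumes "j + nF = i + 1"
  shows "connecting ` simp_cycles Ind_colon j \<subseteq> simp_cycles Ind_C i"
proof clarify
  fix y assume "y \<in> simp_cycles Ind_colon j"
  then have y: "y \<in> simp_chains Ind_colon j" "simp_boundary y = 0"
    by (auto simp: simp_cycles_eq)
  have "join_chain F y \<in> simp_chains Ind_del (i + 1)"
    by (rule join_chain_simp_chains[OF y(1)]) (use assms in simp)
  moreover have "link_chain F (connecting y) = 0"
    by (simp add: link_chain_boundary[OF finite_F] link_join_chain_Ind_colon[OF y(1)] y(2))
  ultimately have "connecting y \<in> simp_chains Ind_C i"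
    using simp_chains_Ind_CI boundary_simp_chains[OF simplicial_complex_Ind_del] by blast
  then show "connecting y \<in> simp_cycles Ind_C i"
    by (simp add: simp_cycles_eq boundary_boundary)
qed

lemma connecting_boundaries:
  assumes "j + nF = i + 1"
  shows "connecting ` simp_boundaries Ind_colon j \<subseteq> simp_boundaries Ind_C i"
proof (rule image_subsetI)
  fix y assume "y \<in> simp_boundaries Ind_colon j"
  then obtain w where w: "w \<in> simp_chains Ind_colon (j + 1)" and y: "y = simp_boundary w"
    by (auto simp: simp_boundaries_eq)
  have "connecting (simp_boundary w)
      = simp_boundary (join_chain F (simp_boundary w) - simp_boundary (join_chain F w))"
    by (simp add: boundary_diff boundary_boundary)
  moreover have "join_chain F (simp_boundary w) - simp_boundary (join_chain F w) \<in> simp_chains Ind_C (i + 1)"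
    by (rule join_chain_boundary_commute[OF w]) (use assms in simp)
  ultimately show "connecting y \<in> simp_boundaries Ind_C i"
    unfolding y by (simp add: simp_boundaries_eq)
qed

lemma Ind_C_cycles_boundaries:
  "simp_cycles Ind_C i \<subseteq> simp_cycles Ind_del i" "simp_boundaries Ind_C i \<subseteq> simp_boundaries Ind_del i"
  using simp_chains_Ind_C_Ind_del by (auto simp: simp_cycles_eq simp_boundaries_eq)

lemma link_chain_cycles:
  "m = i - nF \<Longrightarrow> link_chain F ` simp_cycles Ind_del i \<subseteq> simp_cycles Ind_colon m"
  using link_chain_simp_chains by (auto simp: simp_cycles_eq link_chain_boundary[OF finite_F, symmetric])

lemma link_chain_boundaries:
  assumes "m = i - nF"
  shows "link_chain F ` simp_boundaries Ind_del i \<subseteq> simp_boundaries Ind_colon m"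
proof (rule image_subsetI)
  fix z assume "z \<in> simp_boundaries Ind_del i"
  then obtain w where w: "w \<in> simp_chains Ind_del (i + 1)" and z: "z = simp_boundary w"
    by (auto simp: simp_boundaries_eq)
  have "link_chain F w \<in> simp_chains Ind_colon (m + 1)"
    by (rule link_chain_simp_chains[OF w]) (use assms in simp)
  then show "link_chain F z \<in> simp_boundaries Ind_colon m"
    unfolding z by (simp add: simp_boundaries_eq link_chain_boundary[OF finite_F])
qed

lemma exact_at_Ind_C:
  assumes z: "z \<in> simp_cycles Ind_C i" and "j + nF = i + 1"
  shows "z \<in> simp_boundaries Ind_del i \<longleftrightarrow>
    (\<exists>y\<in>simp_cycles Ind_colon j. z - connecting y \<in> simp_boundaries Ind_C i)"
proof
  assume "z \<in> simp_boundaries Ind_del i"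
  then obtain w where w: "w \<in> simp_chains Ind_del (i + 1)" "z = simp_boundary w"
    by (auto simp: simp_boundaries_eq)
  have "simp_boundary (link_chain F w) = link_chain F z"
    by (simp add: w(2) link_chain_boundary[OF finite_F])
  also have "\<dots> = 0"
    using z by (intro link_chain_Ind_C[where i = i]) (simp add: simp_cycles_eq)
  finally have "simp_boundary (link_chain F w) = 0" .
  moreover have "link_chain F w \<in> simp_chains Ind_colon j"
    by (rule link_chain_simp_chains[OF w(1)]) (use assms(2) in simp)
  ultimately have "link_chain F w \<in> simp_cycles Ind_colon j"
    by (simp add: simp_cycles_eq)
  moreover have "z - connecting (link_chain F w) = simp_boundary (w - join_chain F (link_chain F w))"
    by (simp add: w(2) boundary_diff)
  with chain_diff_join_link[OF w(1)]
  have "z - connecting (link_chain F w) \<in> simp_boundaries Ind_C i"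
    by (simp add: simp_boundaries_eq)
  ultimately show "\<exists>y\<in>simp_cycles Ind_colon j. z - connecting y \<in> simp_boundaries Ind_C i"
    by blast
next
  assume "\<exists>y\<in>simp_cycles Ind_colon j. z - connecting y \<in> simp_boundaries Ind_C i"
  then obtain y a where y: "y \<in> simp_cycles Ind_colon j" and a: "a \<in> simp_chains Ind_C (i + 1)"
    and eq: "z - connecting y = simp_boundary a"
    by (auto simp: simp_boundaries_eq)
  have "join_chain F y \<in> simp_chains Ind_del (i + 1)"
    by (rule join_chain_simp_chains) (use y assms(2) in \<open>auto simp: simp_cycles_eq\<close>)
  then have "a + join_chain F y \<in> simp_chains Ind_del (i + 1)"
    using additive_subgroup_add[OF additive_subgroup_simp_chains simp_chains_Ind_C_Ind_del[OF a]] by blast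
  moreover have "z = simp_boundary (a + join_chain F y)"
    using eq by (simp add: boundary_add algebra_simps)
  ultimately show "z \<in> simp_boundaries Ind_del i"
    by (simp add: simp_boundaries_eq)
qed

lemma exact_at_Ind_del:
  assumes z: "z \<in> simp_cycles Ind_del i" and m: "m = i - nF"
  shows "link_chain F z \<in> simp_boundaries Ind_colon m \<longleftrightarrow>
    (\<exists>z1\<in>simp_cycles Ind_C i. z - z1 \<in> simp_boundaries Ind_del i)"
proof
  assume "link_chain F z \<in> simp_boundaries Ind_colon m"
  then obtain y where y: "y \<in> simp_chains Ind_colon (m + 1)" "link_chain F z = simp_boundary y"
    by (auto simp: simp_boundaries_eq)
  have zc: "z \<in> simp_chains Ind_del i" "simp_boundary z = 0"
    using z by (auto simp: simp_cycles_eq)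
  have py: "join_chain F y \<in> simp_chains Ind_del (i + 1)"
    by (rule join_chain_simp_chains[OF y(1)]) (use m in simp)
  let ?z1 = "z - connecting y"
  have "?z1 \<in> simp_chains Ind_del i"
    using zc(1) boundary_simp_chains[OF simplicial_complex_Ind_del py]
    by (rule additive_subgroup_diff[OF additive_subgroup_simp_chains])
  moreover have "link_chain F ?z1 = 0"
    by (simp add: additive_diff[OF additive_link_chain] link_chain_boundary[OF finite_F]
        link_join_chain_Ind_colon[OF y(1)] y(2))
  ultimately have "?z1 \<in> simp_chains Ind_C i"
    by (rule simp_chains_Ind_CI)
  then have "?z1 \<in> simp_cycles Ind_C i"
    by (simp add: simp_cycles_eq boundary_diff boundary_boundary zc(2))
  moreover have "z - ?z1 \<in> simp_boundaries Ind_del i"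
    using py by (simp add: simp_boundaries_eq)
  ultimately show "\<exists>z1\<in>simp_cycles Ind_C i. z - z1 \<in> simp_boundaries Ind_del i"
    by blast
next
  assume "\<exists>z1\<in>simp_cycles Ind_C i. z - z1 \<in> simp_boundaries Ind_del i"
  then obtain z1 w where z1: "z1 \<in> simp_cycles Ind_C i" and w: "w \<in> simp_chains Ind_del (i + 1)"
    and eq: "z - z1 = simp_boundary w"
    by (auto simp: simp_boundaries_eq)
  have "link_chain F z1 = 0"
    using z1 by (intro link_chain_Ind_C[where i = i]) (simp add: simp_cycles_eq)
  then have "link_chain F z = link_chain F (z - z1)"
    by (simp add: additive_diff[OF additive_link_chain])
  also have "\<dots> = simp_boundary (link_chain F w)"
    by (simp add: eq link_chain_boundary[OF finite_F])
  finally have "link_chain F z = simp_boundary (link_chain F w)" .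
  moreover have "link_chain F w \<in> simp_chains Ind_colon (m + 1)"
    by (rule link_chain_simp_chains[OF w]) (use m in simp)
  ultimately show "link_chain F z \<in> simp_boundaries Ind_colon m"
    by (simp add: simp_boundaries_eq)
qed

lemma exact_at_Ind_colon:
  assumes y: "y \<in> simp_cycles Ind_colon j" and "j + nF = i"
  shows "connecting y \<in> simp_boundaries Ind_C (i - 1) \<longleftrightarrow>
    (\<exists>z\<in>simp_cycles Ind_del i. y - link_chain F z \<in> simp_boundaries Ind_colon j)"
proof
  assume "connecting y \<in> simp_boundaries Ind_C (i - 1)"
  then obtain a where a: "a \<in> simp_chains Ind_C i" "connecting y = simp_boundary a"
    by (auto simp: simp_boundaries_eq)
  have yc: "y \<in> simp_chains Ind_colon j"
    using y by (simp add: simp_cycles_eq)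
  have "join_chain F y \<in> simp_chains Ind_del i"
    by (rule join_chain_simp_chains[OF yc]) (use assms(2) in simp)
  then have "join_chain F y - a \<in> simp_chains Ind_del i"
    using simp_chains_Ind_C_Ind_del[OF a(1)] by (rule additive_subgroup_diff[OF additive_subgroup_simp_chains])
  then have "join_chain F y - a \<in> simp_cycles Ind_del i"
    using a(2) by (simp add: simp_cycles_eq boundary_diff)
  moreover have "link_chain F (join_chain F y - a) = y"
    by (simp add: additive_diff[OF additive_link_chain] link_join_chain_Ind_colon[OF yc]
        link_chain_Ind_C[OF a(1)])
  moreover have "0 \<in> simp_boundaries Ind_colon j"
    by (auto simp: simp_boundaries_eq intro: rev_image_eqI[of 0])
  ultimately show "\<exists>z\<in>simp_cycles Ind_del i. y - link_chain F z \<in> simp_boundaries Ind_colon j"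
    by force
next
  assume "\<exists>z\<in>simp_cycles Ind_del i. y - link_chain F z \<in> simp_boundaries Ind_colon j"
  then obtain z w where z: "z \<in> simp_cycles Ind_del i" and w: "w \<in> simp_chains Ind_colon (j + 1)"
    and eq: "y - link_chain F z = simp_boundary w"
    by (auto simp: simp_boundaries_eq)
  have zc: "z \<in> simp_chains Ind_del i" "simp_boundary z = 0"
    using z by (auto simp: simp_cycles_eq)
  let ?u = "join_chain F (simp_boundary w) - simp_boundary (join_chain F w)"
  let ?v = "z - join_chain F (link_chain F z)"
  have "?u \<in> simp_chains Ind_C i"
    by (rule join_chain_boundary_commute[OF w]) (use assms(2) in simp)
  with chain_diff_join_link[OF zc(1)] have "?u - ?v \<in> simp_chains Ind_C (i - 1 + 1)"
    using additive_subgroup_diff[OF additive_subgroup_simp_chains] by simp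
  moreover have "y = link_chain F z + simp_boundary w"
    using eq by (simp add: algebra_simps)
  then have "connecting y = simp_boundary (?u - ?v)"
    by (simp add: additive_add[OF additive_join_chain] boundary_add boundary_diff boundary_boundary zc(2))
  ultimately show "connecting y \<in> simp_boundaries Ind_C (i - 1)"
    unfolding simp_boundaries_eq by blast
qed

lemma long_exact_sequence:
  fixes i :: int
  defines "f \<equiv> \<lambda>i. induced_map (simp_boundaries Ind_C i) connecting"
    and "g \<equiv> \<lambda>i. induced_map (simp_boundaries Ind_del i) id"
    and "h \<equiv> \<lambda>i. induced_map (simp_boundaries Ind_colon (i - nF)) (link_chain F)"
  shows
    "f i \<in> hom (reduced_homology Ind_colon (i - nF + 1)) (reduced_homology Ind_C i) \<and>
     g i \<in> hom (reduced_homology Ind_C i) (reduced_homology Ind_del i) \<and>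
     h i \<in> hom (reduced_homology Ind_del i) (reduced_homology Ind_colon (i - nF)) \<and>
     exact_seq ([reduced_homology Ind_del i, reduced_homology Ind_C i,
                 reduced_homology Ind_colon (i - nF + 1)], [g i, f i]) \<and>
     exact_seq ([reduced_homology Ind_colon (i - nF), reduced_homology Ind_del i,
                 reduced_homology Ind_C i], [h i, g i]) \<and>
     exact_seq ([reduced_homology Ind_C (i - 1), reduced_homology Ind_colon (i - nF),
                 reduced_homology Ind_del i], [f (i - 1), h i])"
proof -
  note K = simplicial_complex_Ind_C simplicial_complex_Ind_del simplicial_complex_Ind_colon
  have shift: "i - nF + 1 + nF = i + 1" "i - nF + nF = i - 1 + 1"
    by simp_all
  note f_maps = additive_connecting connecting_cycles[OF shift(1)] connecting_boundaries[OF shift(1)]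
    and f_maps' = additive_connecting connecting_cycles[OF shift(2)] connecting_boundaries[OF shift(2)]
    and h_maps = additive_link_chain link_chain_cycles[OF refl] link_chain_boundaries[OF refl]
  have g_maps: "additive id" "id ` simp_cycles Ind_C i \<subseteq> simp_cycles Ind_del i"
    "id ` simp_boundaries Ind_C i \<subseteq> simp_boundaries Ind_del i"
    using additive_id Ind_C_cycles_boundaries by simp_all
  show ?thesis
    unfolding f_def g_def h_def
    using induced_map_hom_reduced_homology[OF K(3,1) f_maps]
      induced_map_hom_reduced_homology[OF K(1,2) g_maps]
      induced_map_hom_reduced_homology[OF K(2,3) h_maps]
      exact_seq_reduced_homology[OF K(3,1,2) f_maps g_maps]
      exact_seq_reduced_homology[OF K(1,2,3) g_maps h_maps]
      exact_seq_reduced_homology[OF K(2,3,1) h_maps f_maps']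
      exact_at_Ind_C[OF _ shift(1)] exact_at_Ind_del[OF _ refl] exact_at_Ind_colon[OF _ shift(2)]
    by simp
qed

end

theorem theorem3p1:
  fixes V :: "'a::linorder set" and C :: "'a set set" and F :: "'a set"
  assumes "hypergraph V C" and "F \<in> C"
  shows "\<exists>f g h. \<forall>i::int.
     f i \<in> hom (reduced_homology (Ind (hcolon_vertices V C F) (hcolon_edges C F)) (i - int (card F) + 1))
               (reduced_homology (Ind V C) i) \<and>
     g i \<in> hom (reduced_homology (Ind V C) i) (reduced_homology (Ind V (hdel C F)) i) \<and>
     h i \<in> hom (reduced_homology (Ind V (hdel C F)) i)
               (reduced_homology (Ind (hcolon_vertices V C F) (hcolon_edges C F)) (i - int (card F))) \<and>
     exact_seq ([reduced_homology (Ind V (hdel C F)) i, reduced_homology (Ind V C) i,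
                 reduced_homology (Ind (hcolon_vertices V C F) (hcolon_edges C F)) (i - int (card F) + 1)],
                [g i, f i]) \<and>
     exact_seq ([reduced_homology (Ind (hcolon_vertices V C F) (hcolon_edges C F)) (i - int (card F)),
                 reduced_homology (Ind V (hdel C F)) i, reduced_homology (Ind V C) i],
                [h i, g i]) \<and>
     exact_seq ([reduced_homology (Ind V C) (i - 1),
                 reduced_homology (Ind (hcolon_vertices V C F) (hcolon_edges C F)) (i - int (card F)),
                 reduced_homology (Ind V (hdel C F)) i],
                [f (i - 1), h i])"
proof -
  interpret hypergraph_edge V C F
    using assms by unfold_locales
  show ?thesis
    by (intro exI allI) (rule long_exact_sequence)
qed

end
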